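(* Let $m$ be a nonzero non-unit element of a unique factorization domain $D$ with identity $e$. Then $\mathrm{Sep}(J(m))=\{k\in D: \gcd(k,m)\sim e\}$.
   Context: $J(m)=mD$, regarded as an ideal of the multiplicative semigroup $D_{mult}$; $\sim$ is the associate relation. For a subset $A$ of a semigroup $S$ (here $S=D_{mult}$): $\mathrm{Id}\,A=\{x\in S: xA\subseteq A,\ Ax\subseteq A\}$ and $\mathrm{Sep}\,A=\mathrm{Id}\,A\cap\mathrm{Id}(S\setminus A)$. *)

theory Defs
  imports "HOL-Computational_Algebra.Factorial_Ring"
begin

definition sgId :: "'a::times set \<Rightarrow> 'a set" where
  "sgId A = {x. (\<forall>a\<in>A. x * a \<in> A) \<and> (\<forall>a\<in>A. a * x \<in> A)}"

definition Sep :: "'a::times set \<Rightarrow> 'a set" where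
  "Sep A = sgId A \<inter> sgId (UNIV - A)"

definition J :: "'a::times \<Rightarrow> 'a set" where
  "J m = {m * d | d. True}"

end

theory Submission
  imports Defs
begin

text \<open>\<open>J m\<close> is the set of multiples of \<open>m\<close>, which is a two-sided ideal of the commutative
  multiplicative semigroup, so its idealiser is everything. An element \<open>k\<close> keeps the non-multiples
  of \<open>m\<close> invariant iff it is coprime to \<open>m\<close>: one direction is Euclid's lemma, and if
  \<open>g = gcd k m\<close> is not a unit then \<open>m div g\<close> is a non-multiple of \<open>m\<close> that \<open>k\<close> sends to a multiple.\<close>

lemma J_eq_multiples: "J m = {a. m dvd a}"
  unfolding J_def by (auto simp: dvd_def)

lemma sgId_multiples:
  fixes m :: "'a::comm_semiring_1"
  shows "sgId {a. m dvd a} = UNIV"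
  unfolding sgId_def by auto

lemma unit_if_dvd_div_self:
  fixes m g :: "'a::semiring_gcd"
  assumes "m \<noteq> 0" and "g dvd m" and "m dvd m div g"
  shows "is_unit g"
proof -
  have "g \<noteq> 0" using assms(1,2) by auto
  then have "m * g dvd m * 1" using assms by (simp add: dvd_div_iff_mult)
  then show ?thesis using assms(1) by (metis dvd_times_left_cancel_iff)
qed

lemma sgId_non_multiples:
  fixes m :: "'a::semiring_gcd"
  assumes "m \<noteq> 0"
  shows "sgId (UNIV - {a. m dvd a}) = {k. coprime k m}"
proof (intro set_eqI iffI)
  fix k assume "k \<in> {k. coprime k m}"
  then show "k \<in> sgId (UNIV - {a. m dvd a})"
    unfolding sgId_def
    by (auto simp: coprime_commute coprime_dvd_mult_left_iff coprime_dvd_mult_right_iff)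
next
  fix k assume k: "k \<in> sgId (UNIV - {a. m dvd a})"
  define g where "g = gcd k m"
  have "m dvd k * (m div g)"
  proof -
    have "k * (m div g) = (k div g) * m"
      by (simp add: g_def div_mult_swap dvd_div_mult)
    then show ?thesis by simp
  qed
  with k have "m dvd m div g"
    unfolding sgId_def by blast
  then have "is_unit g"
    using unit_if_dvd_div_self[OF assms] g_def by blast
  then show "k \<in> {k. coprime k m}"
    by (simp add: g_def coprime_iff_gcd_eq_1)
qed

lemma Sep_J_eq_coprime:
  fixes m :: "'a::semiring_gcd"
  assumes "m \<noteq> 0"
  shows "Sep (J m) = {k. coprime k m}"
  unfolding Sep_def J_eq_multiples sgId_multiples sgId_non_multiples[OF assms] by simp

theorem corollary1:
  fixes m :: "'a :: factorial_ring_gcd"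
  assumes "m \<noteq> 0" and "\<not> is_unit m"
  shows "Sep (J m) = {k. gcd k m dvd 1 \<and> 1 dvd gcd k m}"
  using Sep_J_eq_coprime[OF assms(1)] by (simp add: coprime_iff_gcd_eq_1)

end
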